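(* Let $\rho\ge3$ be an integer and $(\rho_0,\rho_1,\rho_2)$ integers with $2\le\rho_0\le\rho_1\le\rho_2<\rho$ and $\rho_0+\rho_1+\rho_2=2\rho$. For every vector $\alpha=(\alpha_\ell)_{\ell=1}^{2\rho}$ over any extension field $\Phi$ of $F$, the following are equivalent: (i) $\det(M_\rho(\alpha))\neq0$; (ii) $\det(S_\rho(\alpha))\neq0$ and, for each $m\in\{0,1,2\}$, the entries $\alpha_\ell$, $\ell\in\Upsilon_m$, are pairwise distinct.
   Context: $\Upsilon_0=\{1,\dots,\rho_0\}$, $\Upsilon_1=\{\rho_0+1,\dots,\rho_0+\rho_1\}$, $\Upsilon_2=\{\rho_0+\rho_1+1,\dots,2\rho\}$. For $x=(x_\ell)_{\ell=1}^{2\rho}$ and $m\in\{0,1,2\}$, let $V_m(x)$ be the $\rho\times\rho_m$ matrix $(x_\ell^i)_{i=0,\dots,\rho-1;\ \ell\in\Upsilon_m}$. $M_\rho(x)$ is the $2\rho\times2\rho$ matrix $\begin{pmatrix}-V_0(x)&V_1(x)&0\\-V_0(x)&0&V_2(x)\end{pmatrix}$. For $m\in\{0,1,2\}$ let $\sigma_m(z)=\prod_{\ell\in\Upsilon_m}(z-x_\ell)=\sum_{j=0}^{\rho_m}\sigma_{m,j}z^{\rho_m-j}$, and let $E_\rho^{(m)}(x)$ be the $(\rho-\rho_m)\times\rho$ matrix whose $(i,c)$ entry ($i=1,\dots,\rho-\rho_m$, $c=1,\dots,\rho$) equals $\sigma_{m,c-i}$ if $0\le c-i\le\rho_m$ and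 $0$ otherwise. $S_\rho(x)$ is the $\rho\times\rho$ matrix obtained by stacking $E_\rho^{(0)}(x)$, $E_\rho^{(1)}(x)$, $E_\rho^{(2)}(x)$ (in that order) vertically. $M_\rho(\alpha)$, $S_\rho(\alpha)$ denote substitution $x\leftarrow\alpha$. *)

theory Defs
  imports "Jordan_Normal_Form.Determinant" "HOL-Computational_Algebra.Polynomial"
begin

definition Ups :: "nat \<Rightarrow> nat \<Rightarrow> nat \<Rightarrow> nat \<Rightarrow> nat set" where
  "Ups r0 r1 r m =
     (if m = 0 then {1..r0} else if m = 1 then {r0+1..r0+r1} else {r0+r1+1..2*r})"

definition rsize :: "nat \<Rightarrow> nat \<Rightarrow> nat \<Rightarrow> nat \<Rightarrow> nat" where
  "rsize r0 r1 r2 m = (if m = 0 then r0 else if m = 1 then r1 else r2)"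

text \<open>The 2r x 2r matrix M_r(x) (rows/columns 0-based in the library; column j is the
  paper's index l = j+1; row i corresponds to power i mod r).\<close>
definition M_mat :: "nat \<Rightarrow> nat \<Rightarrow> nat \<Rightarrow> (nat \<Rightarrow> 'a::comm_ring_1) \<Rightarrow> 'a mat" where
  "M_mat r r0 r1 x = mat (2*r) (2*r) (\<lambda>(i,j).
     (let l = j + 1; top = (i < r); p = (if i < r then i else i - r) in
      if l \<in> Ups r0 r1 r 0 then - (x l ^ p)
      else if l \<in> Ups r0 r1 r 1 then (if top then x l ^ p else 0)
      else (if top then 0 else x l ^ p)))"

definition sigma_poly :: "nat \<Rightarrow> nat \<Rightarrow> nat \<Rightarrow> (nat \<Rightarrow> 'a::comm_ring_1) \<Rightarrow> nat \<Rightarrow> 'a poly" where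
  "sigma_poly r0 r1 r x m = (\<Prod>l\<in>Ups r0 r1 r m. [:- x l, 1:])"

definition sigma_coeff :: "nat \<Rightarrow> nat \<Rightarrow> nat \<Rightarrow> nat \<Rightarrow> (nat \<Rightarrow> 'a::comm_ring_1) \<Rightarrow> nat \<Rightarrow> nat \<Rightarrow> 'a" where
  "sigma_coeff r0 r1 r2 r x m j = coeff (sigma_poly r0 r1 r x m) (rsize r0 r1 r2 m - j)"

text \<open>Entry (i,c) (1-based) of E^(m)_r(x).\<close>
definition E_entry :: "nat \<Rightarrow> nat \<Rightarrow> nat \<Rightarrow> nat \<Rightarrow> (nat \<Rightarrow> 'a::comm_ring_1) \<Rightarrow> nat \<Rightarrow> nat \<Rightarrow> nat \<Rightarrow> 'a" where
  "E_entry r0 r1 r2 r x m i c =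
     (if i \<le> c \<and> c - i \<le> rsize r0 r1 r2 m then sigma_coeff r0 r1 r2 r x m (c - i) else 0)"

text \<open>S_r(x): E^(0), E^(1), E^(2) stacked vertically (r x r).\<close>
definition S_mat :: "nat \<Rightarrow> nat \<Rightarrow> nat \<Rightarrow> nat \<Rightarrow> (nat \<Rightarrow> 'a::comm_ring_1) \<Rightarrow> 'a mat" where
  "S_mat r r0 r1 r2 x = mat r r (\<lambda>(a,b).
     (let i = a + 1; c = b + 1 in
      if i \<le> r - r0 then E_entry r0 r1 r2 r x 0 i c
      else if i \<le> (r - r0) + (r - r1) then E_entry r0 r1 r2 r x 1 (i - (r - r0)) c
      else E_entry r0 r1 r2 r x 2 (i - (r - r0) - (r - r1)) c))"

end

theory Submission
  imports Defs
begin

text \<open>Column l of M_r(x) evaluates at x_l the two polynomials whose coefficient vectors are the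
halves of a vector of length 2r. So a left kernel vector of M is a pair (U, V) of polynomials of
degree below r, not both zero, such that U + V vanishes at the nodes of Upsilon_0, U at those of
Upsilon_1 and V at those of Upsilon_2. The rows of S_r(x) are shifted coefficient vectors of
sigma_0, sigma_1, sigma_2, so a left kernel vector of S is a syzygy
sigma_0 C + sigma_1 A + sigma_2 B = 0 with deg C < r - r0, deg A < r - r1, deg B < r - r2.
A syzygy gives the pair (sigma_1 A, sigma_2 B). Conversely, if the nodes within each block are
distinct, vanishing at the nodes of Upsilon_m amounts to divisibility by sigma_m, so a pair
(U, V) gives the syzygy (-(U + V)/sigma_0, U/sigma_1, V/sigma_2). A repeated node within a block
produces two equal columns of M.\<close>

lemma det_eq_0_iff_transpose_kernel:
  fixes A :: "'a::field mat"
  assumes "A \<in> carrier_mat n n"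
  shows "det A = 0 \<longleftrightarrow>
    (\<exists>y\<in>carrier_vec n. y \<noteq> 0\<^sub>v n \<and> transpose_mat A *\<^sub>v y = 0\<^sub>v n)"
  using det_0_iff_vec_prod_zero_field[of "transpose_mat A" n] det_transpose[OF assms] assms
  by auto

lemma nonzero_vec_has_nonzero_entry:
  assumes "y \<in> carrier_vec n" "y \<noteq> 0\<^sub>v n"
  obtains i where "i < n" "y $ i \<noteq> 0"
  using assms by (metis carrier_vecD eq_vecI index_zero_vec)

lemma sum_lessThan_double:
  "(\<Sum>i<(n::nat) + n. f i) = (\<Sum>i<n. f i) + (\<Sum>i<n. f (n + i))"
  using sum.atLeastLessThan_concat[of 0 n "n + n" f] sum.atLeastLessThan_shift_0[of f n "n + n"]
  by (simp add: atLeast0LessThan comp_def)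

lemma prod_linear_factors_dvd:
  fixes x :: "'b \<Rightarrow> 'a::idom"
  assumes "finite S" "inj_on x S" "\<forall>l\<in>S. poly p (x l) = 0"
  shows "(\<Prod>l\<in>S. [:- x l, 1:]) dvd p"
  using assms
proof (induction S arbitrary: p rule: finite_induct)
  case empty
  then show ?case by simp
next
  case (insert a S)
  then have "(\<Prod>l\<in>S. [:- x l, 1:]) dvd p" by simp
  then obtain q where q: "p = (\<Prod>l\<in>S. [:- x l, 1:]) * q" ..
  have "poly (\<Prod>l\<in>S. [:- x l, 1:]) (x a) \<noteq> 0"
    using insert by (auto simp: poly_prod)
  with q insert.prems have "poly q (x a) = 0" by simp
  then obtain q' where "q = [:- x a, 1:] * q'"
    by (auto simp: poly_eq_0_iff_dvd elim: dvdE)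
  with q have "p = (\<Prod>l\<in>insert a S. [:- x l, 1:]) * q'"
    by (simp only: prod.insert[OF insert.hyps] mult_ac)
  then show ?case ..
qed

lemma degree_cofactor_less:
  fixes s q :: "'a::idom poly"
  assumes "s \<noteq> 0" "degree (s * q) < n" "degree s < n"
  shows "degree q < n - degree s"
  using assms by (cases "q = 0") (auto simp: degree_mult_eq)

lemma degree_mult_less:
  fixes s q :: "'a::comm_semiring_0 poly"
  assumes "degree q < n - degree s"
  shows "degree (s * q) < n"
  using degree_mult_le[of s q] assms by linarith

section \<open>Polynomials with prescribed coefficient blocks\<close>

definition segment_poly :: "'a::comm_monoid_add vec \<Rightarrow> nat \<Rightarrow> nat \<Rightarrow> 'a poly" where
  "segment_poly y s n = (\<Sum>i<n. monom (y $ (s + i)) i)"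

lemma coeff_segment_poly: "coeff (segment_poly y s n) k = (if k < n then y $ (s + k) else 0)"
  by (simp add: segment_poly_def coeff_sum coeff_monom)

lemma poly_segment_poly:
  fixes y :: "'a::comm_semiring_1 vec"
  shows "poly (segment_poly y s n) t = (\<Sum>i<n. y $ (s + i) * t ^ i)"
  by (simp add: segment_poly_def poly_sum poly_monom)

lemma degree_segment_poly: "0 < n \<Longrightarrow> degree (segment_poly y s n) < n"
  using degree_le[of "n - 1" "segment_poly y s n"] by (fastforce simp: coeff_segment_poly)

lemma segment_poly_eqI:
  assumes "\<forall>i<n. y $ (s + i) = coeff U i" "degree U < n"
  shows "segment_poly y s n = U"
  using assms by (intro poly_eqI) (auto simp: coeff_segment_poly coeff_eq_0)

definition rev_segment_poly :: "'a::comm_monoid_add vec \<Rightarrow> nat \<Rightarrow> nat \<Rightarrow> 'a poly" where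
  "rev_segment_poly w lo hi = (\<Sum>a\<in>{lo..<hi}. monom (w $ a) (hi - 1 - a))"

lemma coeff_rev_segment_poly:
  assumes "lo \<le> hi"
  shows "coeff (rev_segment_poly w lo hi) j = (if j < hi - lo then w $ (hi - 1 - j) else 0)"
proof -
  have "coeff (rev_segment_poly w lo hi) j =
      (\<Sum>a\<in>{lo..<hi}. if j < hi - lo then (if a = hi - 1 - j then w $ a else 0) else 0)"
    unfolding rev_segment_poly_def coeff_sum coeff_monom by (rule sum.cong) auto
  then show ?thesis
    using assms by (auto simp: sum.delta)
qed

lemma degree_rev_segment_poly: "lo < hi \<Longrightarrow> degree (rev_segment_poly w lo hi) < hi - lo"
  using degree_le[of "hi - lo - 1" "rev_segment_poly w lo hi"]
  by (fastforce simp: coeff_rev_segment_poly)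

lemma rev_segment_poly_nonzero:
  assumes "a \<in> {lo..<hi}" "w $ a \<noteq> 0"
  shows "rev_segment_poly w lo hi \<noteq> 0"
proof
  assume "rev_segment_poly w lo hi = 0"
  then have "coeff (rev_segment_poly w lo hi) (hi - 1 - a) = 0" by simp
  moreover have "hi - 1 - a < hi - lo" "hi - 1 - (hi - 1 - a) = a"
    using assms(1) by auto
  ultimately show False
    using assms by (simp add: coeff_rev_segment_poly)
qed

lemma rev_segment_poly_eqI:
  assumes "\<forall>a\<in>{lo..<hi}. w $ a = coeff C (hi - 1 - a)" "degree C < hi - lo"
  shows "rev_segment_poly w lo hi = C"
proof (rule poly_eqI)
  fix j
  show "coeff (rev_segment_poly w lo hi) j = coeff C j"
    using assms by (cases "j < hi - lo") (auto simp: coeff_rev_segment_poly coeff_eq_0)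
qed

lemma coeff_mult_rev_segment_poly:
  fixes p :: "'a::comm_semiring_1 poly"
  shows "coeff (p * rev_segment_poly w lo hi) n =
    (\<Sum>a\<in>{lo..<hi}. w $ a * coeff (monom 1 (hi - 1 - a) * p) n)"
  unfolding rev_segment_poly_def sum_distrib_left coeff_sum
  by (rule sum.cong) (simp_all add: mult.commute[of p] coeff_monom_mult)

section \<open>The matrix M and vanishing pairs\<close>

lemma M_transpose_mult_vec:
  fixes x :: "nat \<Rightarrow> 'a::comm_ring_1"
  assumes y: "dim_vec y = 2 * r" and j: "j < 2 * r"
  shows "(transpose_mat (M_mat r r0 r1 x) *\<^sub>v y) $ j =
    (if j + 1 \<in> Ups r0 r1 r 0 then - poly (segment_poly y 0 r + segment_poly y r r) (x (j + 1))
     else if j + 1 \<in> Ups r0 r1 r 1 then poly (segment_poly y 0 r) (x (j + 1))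
     else poly (segment_poly y r r) (x (j + 1)))"
proof -
  let ?M = "M_mat r r0 r1 x"
  have dims: "dim_row ?M = 2 * r" "dim_col ?M = 2 * r"
    by (simp_all add: M_mat_def)
  have "(transpose_mat ?M *\<^sub>v y) $ j = (\<Sum>i<r + r. ?M $$ (i, j) * y $ i)"
    using dims j y
    by (simp add: index_mult_mat_vec row_transpose scalar_prod_def atLeast0LessThan mult_2)
  also have "\<dots> = (\<Sum>i<r. ?M $$ (i, j) * y $ i) + (\<Sum>i<r. ?M $$ (r + i, j) * y $ (r + i))"
    by (rule sum_lessThan_double)
  also have "\<dots> =
    (if j + 1 \<in> Ups r0 r1 r 0 then - poly (segment_poly y 0 r + segment_poly y r r) (x (j + 1))
     else if j + 1 \<in> Ups r0 r1 r 1 then poly (segment_poly y 0 r) (x (j + 1))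
     else poly (segment_poly y r r) (x (j + 1)))"
    using j by (auto simp: M_mat_def Ups_def Let_def poly_segment_poly sum_negf ac_simps)
  finally show ?thesis .
qed

definition vanishes_on_blocks ::
    "nat \<Rightarrow> nat \<Rightarrow> nat \<Rightarrow> (nat \<Rightarrow> 'a::comm_ring_1) \<Rightarrow> 'a poly \<Rightarrow> 'a poly \<Rightarrow> bool" where
  "vanishes_on_blocks r r0 r1 x U V \<longleftrightarrow>
     (\<forall>l\<in>Ups r0 r1 r 0. poly (U + V) (x l) = 0) \<and> (\<forall>l\<in>Ups r0 r1 r 1. poly U (x l) = 0) \<and>
     (\<forall>l\<in>Ups r0 r1 r 2. poly V (x l) = 0)"

definition vanishing_pair ::
    "nat \<Rightarrow> nat \<Rightarrow> nat \<Rightarrow> (nat \<Rightarrow> 'a::comm_ring_1) \<Rightarrow> 'a poly \<Rightarrow> 'a poly \<Rightarrow> bool" where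
  "vanishing_pair r r0 r1 x U V \<longleftrightarrow>
     (U \<noteq> 0 \<or> V \<noteq> 0) \<and> degree U < r \<and> degree V < r \<and> vanishes_on_blocks r r0 r1 x U V"

lemma Ups_partition:
  assumes "r0 + r1 \<le> 2 * r"
  shows "{1..2 * r} = Ups r0 r1 r 0 \<union> Ups r0 r1 r 1 \<union> Ups r0 r1 r 2"
    and "Ups r0 r1 r 0 \<inter> Ups r0 r1 r 1 = {}" "Ups r0 r1 r 0 \<inter> Ups r0 r1 r 2 = {}"
    and "Ups r0 r1 r 1 \<inter> Ups r0 r1 r 2 = {}"
  using assms by (auto simp: Ups_def)

lemma M_transpose_kernel_iff:
  fixes x :: "nat \<Rightarrow> 'a::comm_ring_1"
  assumes y: "dim_vec y = 2 * r" and r01: "r0 + r1 \<le> 2 * r"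
  shows "transpose_mat (M_mat r r0 r1 x) *\<^sub>v y = 0\<^sub>v (2 * r) \<longleftrightarrow>
    vanishes_on_blocks r r0 r1 x (segment_poly y 0 r) (segment_poly y r r)"
proof -
  let ?U = "segment_poly y 0 r" and ?V = "segment_poly y r r"
  let ?vanishes = "\<lambda>l. if l \<in> Ups r0 r1 r 0 then poly (?U + ?V) (x l) = 0
    else if l \<in> Ups r0 r1 r 1 then poly ?U (x l) = 0 else poly ?V (x l) = 0"
  have shift: "(\<forall>j<n. P (j + 1)) \<longleftrightarrow> (\<forall>l\<in>{1..n}. P l)" for n and P :: "nat \<Rightarrow> bool"
    unfolding image_Suc_lessThan[symmetric] by auto
  have entry: "(transpose_mat (M_mat r r0 r1 x) *\<^sub>v y) $ j = 0 \<longleftrightarrow> ?vanishes (j + 1)"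
    if "j < 2 * r" for j
    using M_transpose_mult_vec[OF y that, of r0 r1 x] by (simp add: neg_eq_iff_add_eq_0)
  have "transpose_mat (M_mat r r0 r1 x) *\<^sub>v y = 0\<^sub>v (2 * r) \<longleftrightarrow>
      (\<forall>j<2 * r. (transpose_mat (M_mat r r0 r1 x) *\<^sub>v y) $ j = 0)"
    by (auto simp: vec_eq_iff M_mat_def)
  also have "\<dots> \<longleftrightarrow> (\<forall>j<2 * r. ?vanishes (j + 1))"
    using entry by blast
  also have "\<dots> \<longleftrightarrow> (\<forall>l\<in>{1..2 * r}. ?vanishes l)"
    by (rule shift)
  also have "\<dots> \<longleftrightarrow> vanishes_on_blocks r r0 r1 x ?U ?V"
    using Ups_partition[OF r01] unfolding vanishes_on_blocks_def by auto
  finally show ?thesis .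
qed

lemma vanishing_pair_of_kernel_vec:
  fixes x :: "nat \<Rightarrow> 'a::comm_ring_1"
  assumes r: "0 < r" and r01: "r0 + r1 \<le> 2 * r"
    and y: "y \<in> carrier_vec (2 * r)" "y \<noteq> 0\<^sub>v (2 * r)"
    and ker: "transpose_mat (M_mat r r0 r1 x) *\<^sub>v y = 0\<^sub>v (2 * r)"
  shows "vanishing_pair r r0 r1 x (segment_poly y 0 r) (segment_poly y r r)"
proof -
  obtain i where i: "i < 2 * r" "y $ i \<noteq> 0"
    using y by (rule nonzero_vec_has_nonzero_entry)
  have "coeff (segment_poly y 0 r) i \<noteq> 0 \<or> coeff (segment_poly y r r) (i - r) \<noteq> 0"
    using i by (cases "i < r") (simp_all add: coeff_segment_poly)
  then have "segment_poly y 0 r \<noteq> 0 \<or> segment_poly y r r \<noteq> 0"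
    by auto
  moreover have "vanishes_on_blocks r r0 r1 x (segment_poly y 0 r) (segment_poly y r r)"
    using ker M_transpose_kernel_iff[OF carrier_vecD[OF y(1)] r01] by simp
  ultimately show ?thesis
    unfolding vanishing_pair_def using degree_segment_poly[OF r] by blast
qed

lemma kernel_vec_of_vanishing_pair:
  fixes x :: "nat \<Rightarrow> 'a::comm_ring_1"
  assumes r01: "r0 + r1 \<le> 2 * r" and "vanishing_pair r r0 r1 x U V"
  obtains y where "y \<in> carrier_vec (2 * r)" "y \<noteq> 0\<^sub>v (2 * r)"
    "transpose_mat (M_mat r r0 r1 x) *\<^sub>v y = 0\<^sub>v (2 * r)"
proof
  have nz: "U \<noteq> 0 \<or> V \<noteq> 0" and deg: "degree U < r" "degree V < r"
    and van: "vanishes_on_blocks r r0 r1 x U V"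
    using assms(2) by (simp_all add: vanishing_pair_def)
  define y where "y = vec (2 * r) (\<lambda>i. if i < r then coeff U i else coeff V (i - r))"
  show y: "y \<in> carrier_vec (2 * r)"
    by (simp add: y_def)
  have U: "segment_poly y 0 r = U"
    using deg(1) by (intro segment_poly_eqI) (simp_all add: y_def)
  have V: "segment_poly y r r = V"
    using deg(2) by (intro segment_poly_eqI) (simp_all add: y_def)
  show "y \<noteq> 0\<^sub>v (2 * r)"
  proof
    assume "y = 0\<^sub>v (2 * r)"
    then have "segment_poly y 0 r = 0" "segment_poly y r r = 0"
      by (simp_all add: segment_poly_def)
    with U V nz show False
      by simp
  qed
  show "transpose_mat (M_mat r r0 r1 x) *\<^sub>v y = 0\<^sub>v (2 * r)"
    using M_transpose_kernel_iff[OF carrier_vecD[OF y] r01] van U V by simp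
qed

lemma det_M_eq_0_iff:
  fixes x :: "nat \<Rightarrow> 'a::field"
  assumes "0 < r" and "r0 + r1 \<le> 2 * r"
  shows "det (M_mat r r0 r1 x) = 0 \<longleftrightarrow> (\<exists>U V. vanishing_pair r r0 r1 x U V)"
proof -
  have M: "M_mat r r0 r1 x \<in> carrier_mat (2 * r) (2 * r)"
    by (simp add: M_mat_def)
  show ?thesis
    unfolding det_eq_0_iff_transpose_kernel[OF M]
    using vanishing_pair_of_kernel_vec[OF assms] kernel_vec_of_vanishing_pair[OF assms(2)] by metis
qed

lemma det_M_eq_0_if_repeated_node:
  fixes x :: "nat \<Rightarrow> 'a::field"
  assumes r01: "r0 + r1 \<le> 2 * r"
    and l: "l \<in> Ups r0 r1 r m" "l' \<in> Ups r0 r1 r m" "l \<noteq> l'" "x l = x l'"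
  shows "det (M_mat r r0 r1 x) = 0"
proof -
  let ?M = "M_mat r r0 r1 x"
  have M: "?M \<in> carrier_mat (2 * r) (2 * r)"
    by (simp add: M_mat_def)
  have range: "l - 1 < 2 * r" "l' - 1 < 2 * r" "l - 1 \<noteq> l' - 1" "l - 1 + 1 = l" "l' - 1 + 1 = l'"
    using l r01 by (auto simp: Ups_def split: if_splits)
  have same_block: "l \<in> Ups r0 r1 r k \<longleftrightarrow> l' \<in> Ups r0 r1 r k" for k
    using l by (auto simp: Ups_def split: if_splits)
  have blocks: "(l \<in> Ups r0 r1 r 0 \<and> l' \<in> Ups r0 r1 r 0) \<or>
      (l \<notin> Ups r0 r1 r 0 \<and> l' \<notin> Ups r0 r1 r 0 \<and> l \<in> Ups r0 r1 r 1 \<and> l' \<in> Ups r0 r1 r 1) \<or>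
      (l \<notin> Ups r0 r1 r 0 \<and> l' \<notin> Ups r0 r1 r 0 \<and> l \<notin> Ups r0 r1 r 1 \<and> l' \<notin> Ups r0 r1 r 1)"
    using same_block[of 0] same_block[of 1] by blast
  have "?M $$ (i, l - 1) = ?M $$ (i, l' - 1)" if "i < 2 * r" for i
    using blocks that range by (elim disjE) (simp_all add: M_mat_def Let_def l(4))
  then have "col ?M (l - 1) = col ?M (l' - 1)"
    using M range by (auto intro!: eq_vecI)
  then show ?thesis
    using det_identical_columns[OF M range(3) range(1,2)] by blast
qed

section \<open>The matrix S and syzygies of the sigma polynomials\<close>

lemma band_entry_eq_coeff_monom_mult:
  fixes p :: "'a::comm_semiring_1 poly"
  assumes "degree p = d" "1 \<le> i" "K + i + d = R" "1 \<le> c" "c \<le> R"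
  shows "(if i \<le> c \<and> c - i \<le> d then coeff p (d - (c - i)) else 0) =
    coeff (monom 1 K * p) (R - c)"
proof (cases "c < i")
  case True
  then have "degree p < R - c - K"
    using assms by linarith
  then show ?thesis
    using True assms by (auto simp: coeff_monom_mult coeff_eq_0)
next
  case False
  then show ?thesis
    using assms by (auto simp: coeff_monom_mult intro: arg_cong[where f = "coeff p"])
qed

lemma finite_Ups: "finite (Ups r0 r1 r m)"
  by (simp add: Ups_def)

lemma sigma_poly_nonzero: "sigma_poly r0 r1 r (x :: nat \<Rightarrow> 'a::idom) m \<noteq> 0"
  by (simp add: sigma_poly_def finite_Ups)

lemma poly_sigma_poly_node:
  "l \<in> Ups r0 r1 r m \<Longrightarrow> poly (sigma_poly r0 r1 r (x :: nat \<Rightarrow> 'a::idom) m) (x l) = 0"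
  by (auto simp: sigma_poly_def poly_prod finite_Ups)

definition sigma_combination ::
    "nat \<Rightarrow> nat \<Rightarrow> nat \<Rightarrow> nat \<Rightarrow> (nat \<Rightarrow> 'a::comm_ring_1) \<Rightarrow> 'a vec \<Rightarrow> 'a poly" where
  "sigma_combination r r0 r1 r2 x w =
     sigma_poly r0 r1 r x 0 * rev_segment_poly w 0 (r - r0)
     + sigma_poly r0 r1 r x 1 * rev_segment_poly w (r - r0) r2
     + sigma_poly r0 r1 r x 2 * rev_segment_poly w r2 r"

definition sigma_syzygy ::
    "nat \<Rightarrow> nat \<Rightarrow> nat \<Rightarrow> nat \<Rightarrow> (nat \<Rightarrow> 'a::comm_ring_1) \<Rightarrow> 'a poly \<Rightarrow> 'a poly \<Rightarrow> 'a poly \<Rightarrow> bool" where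
  "sigma_syzygy r r0 r1 r2 x C A B \<longleftrightarrow>
     (C \<noteq> 0 \<or> A \<noteq> 0 \<or> B \<noteq> 0) \<and> degree C < r - r0 \<and> degree A < r - r1 \<and> degree B < r - r2 \<and>
     sigma_poly r0 r1 r x 0 * C + sigma_poly r0 r1 r x 1 * A + sigma_poly r0 r1 r x 2 * B = 0"

locale block_sizes =
  fixes r r0 r1 r2 :: nat
  assumes sizes_sum: "r0 + r1 + r2 = 2 * r"
    and sizes_less: "r0 < r" "r1 < r" "r2 < r"
begin

lemma co_sizes_sum: "(r - r0) + (r - r1) = r2"
  using sizes_sum sizes_less by linarith

lemma degree_sigma_poly:
  fixes x :: "nat \<Rightarrow> 'a::idom"
  shows "degree (sigma_poly r0 r1 r x 0) = r0" "degree (sigma_poly r0 r1 r x 1) = r1"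
    "degree (sigma_poly r0 r1 r x 2) = r2"
  using sizes_sum by (simp_all add: sigma_poly_def degree_prod_sum_eq Ups_def)

lemma S_mat_entry:
  fixes x :: "nat \<Rightarrow> 'a::idom"
  assumes a: "a < r" and b: "b < r"
  shows "S_mat r r0 r1 r2 x $$ (a, b) =
    (if a < r - r0 then coeff (monom 1 (r - r0 - 1 - a) * sigma_poly r0 r1 r x 0) (r - 1 - b)
     else if a < r2 then coeff (monom 1 (r2 - 1 - a) * sigma_poly r0 r1 r x 1) (r - 1 - b)
     else coeff (monom 1 (r - 1 - a) * sigma_poly r0 r1 r x 2) (r - 1 - b))"
proof -
  have S: "S_mat r r0 r1 r2 x $$ (a, b) =
      (if a + 1 \<le> r - r0 then E_entry r0 r1 r2 r x 0 (a + 1) (b + 1)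
       else if a + 1 \<le> r2 then E_entry r0 r1 r2 r x 1 (a + 1 - (r - r0)) (b + 1)
       else E_entry r0 r1 r2 r x 2 (a + 1 - (r - r0) - (r - r1)) (b + 1))"
    using a b co_sizes_sum by (simp add: S_mat_def Let_def)
  show ?thesis
  proof (cases "a < r - r0")
    case True
    have "E_entry r0 r1 r2 r x 0 (a + 1) (b + 1) =
        coeff (monom 1 (r - r0 - 1 - a) * sigma_poly r0 r1 r x 0) (r - (b + 1))"
      unfolding E_entry_def sigma_coeff_def using True b
      by (subst band_entry_eq_coeff_monom_mult[OF degree_sigma_poly(1),
            of "a + 1" "r - r0 - 1 - a" r "b + 1", symmetric])
        (auto simp: rsize_def)
    then show ?thesis
      using S True by simp
  next
    case out0: False
    show ?thesis
    proof (cases "a < r2")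
      case True
      have "E_entry r0 r1 r2 r x 1 (a + 1 - (r - r0)) (b + 1) =
          coeff (monom 1 (r2 - 1 - a) * sigma_poly r0 r1 r x 1) (r - (b + 1))"
        unfolding E_entry_def sigma_coeff_def using True out0 b co_sizes_sum
        by (subst band_entry_eq_coeff_monom_mult[OF degree_sigma_poly(2),
              of "a + 1 - (r - r0)" "r2 - 1 - a" r "b + 1", symmetric])
          (auto simp: rsize_def)
      then show ?thesis
        using S True out0 by simp
    next
      case False
      have "E_entry r0 r1 r2 r x 2 (a + 1 - (r - r0) - (r - r1)) (b + 1) =
          coeff (monom 1 (r - 1 - a) * sigma_poly r0 r1 r x 2) (r - (b + 1))"
        unfolding E_entry_def sigma_coeff_def using False out0 a b co_sizes_sum
        by (subst band_entry_eq_coeff_monom_mult[OF degree_sigma_poly(3),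
              of "a + 1 - (r - r0) - (r - r1)" "r - 1 - a" r "b + 1", symmetric])
          (auto simp: rsize_def)
      then show ?thesis
        using S False out0 by simp
    qed
  qed
qed

lemma S_transpose_mult_vec:
  fixes x :: "nat \<Rightarrow> 'a::idom"
  assumes w: "dim_vec w = r" and b: "b < r"
  shows "(transpose_mat (S_mat r r0 r1 r2 x) *\<^sub>v w) $ b =
    coeff (sigma_combination r r0 r1 r2 x w) (r - 1 - b)"
proof -
  let ?S = "S_mat r r0 r1 r2 x"
  have dims: "dim_row ?S = r" "dim_col ?S = r"
    by (simp_all add: S_mat_def)
  have "(transpose_mat ?S *\<^sub>v w) $ b = (\<Sum>a\<in>{0..<r}. w $ a * ?S $$ (a, b))"
    using dims b w by (simp add: index_mult_mat_vec row_transpose scalar_prod_def mult.commute)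
  also have "\<dots> = (\<Sum>a\<in>{0..<r - r0}. w $ a * ?S $$ (a, b))
      + (\<Sum>a\<in>{r - r0..<r2}. w $ a * ?S $$ (a, b)) + (\<Sum>a\<in>{r2..<r}. w $ a * ?S $$ (a, b))"
    using co_sizes_sum sizes_less by (simp add: sum.atLeastLessThan_concat)
  also have "(\<Sum>a\<in>{0..<r - r0}. w $ a * ?S $$ (a, b)) =
      coeff (sigma_poly r0 r1 r x 0 * rev_segment_poly w 0 (r - r0)) (r - 1 - b)"
    unfolding coeff_mult_rev_segment_poly
    by (rule sum.cong) (use b in \<open>auto simp: S_mat_entry[OF _ b]\<close>)
  also have "(\<Sum>a\<in>{r - r0..<r2}. w $ a * ?S $$ (a, b)) =
      coeff (sigma_poly r0 r1 r x 1 * rev_segment_poly w (r - r0) r2) (r - 1 - b)"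
    unfolding coeff_mult_rev_segment_poly
    by (rule sum.cong) (use b sizes_less in \<open>auto simp: S_mat_entry[OF _ b]\<close>)
  also have "(\<Sum>a\<in>{r2..<r}. w $ a * ?S $$ (a, b)) =
      coeff (sigma_poly r0 r1 r x 2 * rev_segment_poly w r2 r) (r - 1 - b)"
    unfolding coeff_mult_rev_segment_poly
    by (rule sum.cong) (use b sizes_less co_sizes_sum in \<open>auto simp: S_mat_entry[OF _ b]\<close>)
  finally show ?thesis
    by (simp add: sigma_combination_def)
qed

lemma coeff_sigma_combination_high:
  fixes x :: "nat \<Rightarrow> 'a::idom"
  assumes "r \<le> n"
  shows "coeff (sigma_combination r r0 r1 r2 x w) n = 0"
proof -
  have high: "coeff (p * rev_segment_poly w lo hi) n = 0"
    if "degree p + (hi - lo) \<le> r" "lo < hi" for p :: "'a poly" and lo hi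
    unfolding coeff_mult_rev_segment_poly
    using that assms by (intro sum.neutral) (auto simp: coeff_monom_mult intro!: coeff_eq_0)
  have "coeff (sigma_poly r0 r1 r x 0 * rev_segment_poly w 0 (r - r0)) n = 0"
    by (rule high) (use sizes_less in \<open>simp_all add: degree_sigma_poly\<close>)
  moreover have "coeff (sigma_poly r0 r1 r x 1 * rev_segment_poly w (r - r0) r2) n = 0"
    by (rule high) (use degree_sigma_poly(2)[of x] sizes_less co_sizes_sum in linarith)+
  moreover have "coeff (sigma_poly r0 r1 r x 2 * rev_segment_poly w r2 r) n = 0"
    by (rule high) (use sizes_less in \<open>simp_all add: degree_sigma_poly\<close>)
  ultimately show ?thesis
    by (simp add: sigma_combination_def)
qed

lemma S_transpose_kernel_iff:
  fixes x :: "nat \<Rightarrow> 'a::idom"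
  assumes w: "dim_vec w = r"
  shows "transpose_mat (S_mat r r0 r1 r2 x) *\<^sub>v w = 0\<^sub>v r \<longleftrightarrow>
    sigma_combination r r0 r1 r2 x w = 0"
proof -
  have "dim_vec (transpose_mat (S_mat r r0 r1 r2 x) *\<^sub>v w) = r"
    by (simp add: S_mat_def)
  then have "transpose_mat (S_mat r r0 r1 r2 x) *\<^sub>v w = 0\<^sub>v r \<longleftrightarrow>
      (\<forall>b<r. (transpose_mat (S_mat r r0 r1 r2 x) *\<^sub>v w) $ b = 0)"
    by (auto simp: vec_eq_iff)
  also have "\<dots> \<longleftrightarrow> (\<forall>b<r. coeff (sigma_combination r r0 r1 r2 x w) (r - 1 - b) = 0)"
    by (rule all_cong) (simp only: S_transpose_mult_vec[OF w])
  also have "\<dots> \<longleftrightarrow> (\<forall>n<r. coeff (sigma_combination r r0 r1 r2 x w) n = 0)"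
  proof (intro iffI allI impI)
    fix n
    assume "\<forall>b<r. coeff (sigma_combination r r0 r1 r2 x w) (r - 1 - b) = 0" "n < r"
    moreover have "r - 1 - (r - 1 - n) = n" "r - 1 - n < r"
      using \<open>n < r\<close> by auto
    ultimately show "coeff (sigma_combination r r0 r1 r2 x w) n = 0"
      by metis
  qed auto
  also have "\<dots> \<longleftrightarrow> sigma_combination r r0 r1 r2 x w = 0"
  proof
    assume low: "\<forall>n<r. coeff (sigma_combination r r0 r1 r2 x w) n = 0"
    show "sigma_combination r r0 r1 r2 x w = 0"
    proof (rule poly_eqI)
      fix n
      show "coeff (sigma_combination r r0 r1 r2 x w) n = coeff 0 n"
        using low coeff_sigma_combination_high[of n x w] by (cases "n < r") auto
    qed
  qed simp
  finally show ?thesis .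
qed

lemma sigma_syzygy_of_kernel_vec:
  fixes x :: "nat \<Rightarrow> 'a::idom"
  assumes w: "w \<in> carrier_vec r" "w \<noteq> 0\<^sub>v r"
    and ker: "transpose_mat (S_mat r r0 r1 r2 x) *\<^sub>v w = 0\<^sub>v r"
  shows "sigma_syzygy r r0 r1 r2 x (rev_segment_poly w 0 (r - r0)) (rev_segment_poly w (r - r0) r2)
    (rev_segment_poly w r2 r)"
proof -
  have bounds: "r - r0 < r2" "r2 - (r - r0) = r - r1"
    using sizes_less co_sizes_sum by linarith+
  obtain a where a: "a < r" "w $ a \<noteq> 0"
    using w by (rule nonzero_vec_has_nonzero_entry)
  then have "a \<in> {0..<r - r0} \<or> a \<in> {r - r0..<r2} \<or> a \<in> {r2..<r}"
    by auto
  then have "rev_segment_poly w 0 (r - r0) \<noteq> 0 \<or> rev_segment_poly w (r - r0) r2 \<noteq> 0 \<or>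
      rev_segment_poly w r2 r \<noteq> 0"
    using a(2) rev_segment_poly_nonzero by blast
  moreover have "sigma_combination r r0 r1 r2 x w = 0"
    using ker S_transpose_kernel_iff[OF carrier_vecD[OF w(1)]] by simp
  ultimately show ?thesis
    unfolding sigma_syzygy_def sigma_combination_def
    using degree_rev_segment_poly[of 0 "r - r0" w] degree_rev_segment_poly[of "r - r0" r2 w]
      degree_rev_segment_poly[of r2 r w] bounds sizes_less
    by auto
qed

lemma kernel_vec_of_sigma_syzygy:
  fixes x :: "nat \<Rightarrow> 'a::idom"
  assumes "sigma_syzygy r r0 r1 r2 x C A B"
  obtains w where "w \<in> carrier_vec r" "w \<noteq> 0\<^sub>v r"
    "transpose_mat (S_mat r r0 r1 r2 x) *\<^sub>v w = 0\<^sub>v r"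
proof
  have bounds: "r - r0 < r2" "r2 - (r - r0) = r - r1"
    using sizes_less co_sizes_sum by linarith+
  have nz: "C \<noteq> 0 \<or> A \<noteq> 0 \<or> B \<noteq> 0"
    and deg: "degree C < r - r0" "degree A < r - r1" "degree B < r - r2"
    and comb: "sigma_poly r0 r1 r x 0 * C + sigma_poly r0 r1 r x 1 * A + sigma_poly r0 r1 r x 2 * B = 0"
    using assms by (simp_all add: sigma_syzygy_def)
  define w where "w = vec r (\<lambda>a. if a < r - r0 then coeff C (r - r0 - 1 - a)
    else if a < r2 then coeff A (r2 - 1 - a) else coeff B (r - 1 - a))"
  show w: "w \<in> carrier_vec r"
    by (simp add: w_def)
  have C: "rev_segment_poly w 0 (r - r0) = C"
    using deg(1) sizes_less by (intro rev_segment_poly_eqI) (auto simp: w_def)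
  have A: "rev_segment_poly w (r - r0) r2 = A"
    using deg(2) bounds sizes_less by (intro rev_segment_poly_eqI) (auto simp: w_def)
  have B: "rev_segment_poly w r2 r = B"
    using deg(3) bounds by (intro rev_segment_poly_eqI) (auto simp: w_def)
  show "w \<noteq> 0\<^sub>v r"
  proof
    assume "w = 0\<^sub>v r"
    then have zero: "rev_segment_poly w lo hi = 0" if "hi \<le> r" for lo hi
      using that by (simp add: rev_segment_poly_def)
    from zero[of "r - r0" 0] zero[of r2 "r - r0"] zero[of r r2] show False
      using C A B nz sizes_less by simp
  qed
  have "sigma_combination r r0 r1 r2 x w = 0"
    using comb C A B by (simp add: sigma_combination_def)
  then show "transpose_mat (S_mat r r0 r1 r2 x) *\<^sub>v w = 0\<^sub>v r"
    using S_transpose_kernel_iff[OF carrier_vecD[OF w]] by simp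
qed

lemma det_S_eq_0_iff:
  fixes x :: "nat \<Rightarrow> 'a::field"
  shows "det (S_mat r r0 r1 r2 x) = 0 \<longleftrightarrow> (\<exists>C A B. sigma_syzygy r r0 r1 r2 x C A B)"
proof -
  have S: "S_mat r r0 r1 r2 x \<in> carrier_mat r r"
    by (simp add: S_mat_def)
  show ?thesis
    unfolding det_eq_0_iff_transpose_kernel[OF S]
    using sigma_syzygy_of_kernel_vec kernel_vec_of_sigma_syzygy by metis
qed

section \<open>Vanishing pairs versus syzygies\<close>

lemma vanishing_pair_of_sigma_syzygy:
  fixes x :: "nat \<Rightarrow> 'a::idom"
  assumes "sigma_syzygy r r0 r1 r2 x C A B"
  shows "vanishing_pair r r0 r1 x (sigma_poly r0 r1 r x 1 * A) (sigma_poly r0 r1 r x 2 * B)"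
proof -
  let ?s = "sigma_poly r0 r1 r x"
  have nz: "C \<noteq> 0 \<or> A \<noteq> 0 \<or> B \<noteq> 0"
    and deg: "degree C < r - r0" "degree A < r - r1" "degree B < r - r2"
    and comb: "?s 0 * C + ?s 1 * A + ?s 2 * B = 0"
    using assms by (simp_all add: sigma_syzygy_def)
  have sum: "?s 1 * A + ?s 2 * B = - (?s 0 * C)"
    using comb
    by (simp add: add.assoc add_eq_0_iff2 eq_neg_iff_add_eq_0 add.commute[of "?s 0 * C"])
  have "?s 1 * A \<noteq> 0 \<or> ?s 2 * B \<noteq> 0"
    using nz comb sigma_poly_nonzero[of r0 r1 r x] by auto
  moreover have "degree (?s 1 * A) < r" "degree (?s 2 * B) < r"
    using deg degree_sigma_poly[of x] by (simp_all add: degree_mult_less)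
  moreover have "vanishes_on_blocks r r0 r1 x (?s 1 * A) (?s 2 * B)"
    unfolding vanishes_on_blocks_def sum by (simp add: poly_sigma_poly_node)
  ultimately show ?thesis
    unfolding vanishing_pair_def by blast
qed

lemma sigma_syzygy_of_vanishing_pair:
  fixes x :: "nat \<Rightarrow> 'a::idom"
  assumes inj: "\<And>m. m \<in> {0, 1, 2} \<Longrightarrow> inj_on x (Ups r0 r1 r m)"
    and pair: "vanishing_pair r r0 r1 x U V"
  shows "\<exists>C A B. sigma_syzygy r r0 r1 r2 x C A B"
proof -
  let ?s = "sigma_poly r0 r1 r x"
  have nz: "U \<noteq> 0 \<or> V \<noteq> 0" and deg: "degree U < r" "degree V < r" "degree (U + V) < r"
    and van: "vanishes_on_blocks r r0 r1 x U V"
    using pair degree_add_le_max[of U V] unfolding vanishing_pair_def by auto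
  have dvd: "?s m dvd p" if "m \<in> {0, 1, 2}" "\<forall>l\<in>Ups r0 r1 r m. poly p (x l) = 0" for m p
    unfolding sigma_poly_def using finite_Ups inj[OF that(1)] that(2)
    by (rule prod_linear_factors_dvd)
  have "?s 1 dvd U"
    using dvd[of 1 U] van unfolding vanishes_on_blocks_def by simp
  then obtain A where A: "U = ?s 1 * A" ..
  have "?s 2 dvd V"
    using dvd[of 2 V] van unfolding vanishes_on_blocks_def by simp
  then obtain B where B: "V = ?s 2 * B" ..
  have "?s 0 dvd U + V"
    using dvd[of 0 "U + V"] van unfolding vanishes_on_blocks_def by simp
  then obtain C where C: "U + V = ?s 0 * C" ..
  have "sigma_syzygy r r0 r1 r2 x (- C) A B"
    unfolding sigma_syzygy_def
  proof (intro conjI)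
    show "- C \<noteq> 0 \<or> A \<noteq> 0 \<or> B \<noteq> 0"
      using nz A B by auto
    show "degree (- C) < r - r0"
      using degree_cofactor_less[OF sigma_poly_nonzero, of r0 r1 r x 0 C r] deg(3) C sizes_less
        degree_sigma_poly(1)[of x] by simp
    show "degree A < r - r1"
      using degree_cofactor_less[OF sigma_poly_nonzero, of r0 r1 r x 1 A r] deg(1) A sizes_less
        degree_sigma_poly(2)[of x] by simp
    show "degree B < r - r2"
      using degree_cofactor_less[OF sigma_poly_nonzero, of r0 r1 r x 2 B r] deg(2) B sizes_less
        degree_sigma_poly(3)[of x] by simp
    show "?s 0 * - C + ?s 1 * A + ?s 2 * B = 0"
      using A B C by (simp add: algebra_simps)
  qed
  then show ?thesis
    by blast
qed

end

theorem mainTheorem18: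
  fixes x :: "nat \<Rightarrow> 'a::field" and r r0 r1 r2 :: nat
  assumes "r \<ge> 3" and "2 \<le> r0" and "r0 \<le> r1" and "r1 \<le> r2" and "r2 < r"
    and "r0 + r1 + r2 = 2 * r"
  shows "det (M_mat r r0 r1 x) \<noteq> 0 \<longleftrightarrow>
           (det (S_mat r r0 r1 r2 x) \<noteq> 0 \<and> (\<forall>m\<in>{0,1,2::nat}. inj_on x (Ups r0 r1 r m)))"
proof -
  interpret block_sizes r r0 r1 r2
    using assms by unfold_locales linarith+
  have r: "0 < r" and r01: "r0 + r1 \<le> 2 * r"
    using assms by linarith+
  note det_M = det_M_eq_0_iff[OF r r01, of x]
  have "inj_on x (Ups r0 r1 r m)" if "det (M_mat r r0 r1 x) \<noteq> 0" for m
    using that det_M_eq_0_if_repeated_node[OF r01] by (meson inj_onI)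
  moreover have "det (S_mat r r0 r1 r2 x) \<noteq> 0" if "det (M_mat r r0 r1 x) \<noteq> 0"
    using that det_M det_S_eq_0_iff vanishing_pair_of_sigma_syzygy by blast
  moreover have "det (M_mat r r0 r1 x) \<noteq> 0"
    if "det (S_mat r r0 r1 r2 x) \<noteq> 0" "\<forall>m\<in>{0,1,2}. inj_on x (Ups r0 r1 r m)"
    using that det_M det_S_eq_0_iff sigma_syzygy_of_vanishing_pair by blast
  ultimately show ?thesis
    by blast
qed

end
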